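(* Let $r\in\mathcal{Q}'(1)$ and suppose $r$ contains a pure term, i.e. a monomial $z^k$ or $\overline z^k$ with $k\ge1$ and nonzero coefficient. Then $r(0,0)>0$.
   Context: $\mathcal{Q}'(1)$: Hermitian symmetric polynomials $r(z,\overline z)=\sum c_{jk}z^j\overline z^k$ ($c_{jk}=\overline{c_{kj}}$) in one complex variable with $r(z,\overline z)\ge0$ for all $z$ for which there exist a Hermitian symmetric polynomial $s\ge0$, not identically $0$, and a holomorphic polynomial mapping $F$ with $rs=\|F\|^2$. *)

theory Defs
  imports "HOL-Analysis.Analysis" "HOL-Computational_Algebra.Polynomial"
begin

text \<open>A polynomial in z and conj z is given by its coefficient function
  c j k (coefficient of z^j conj(z)^k), which must have finite support.\<close>

definition bipoly :: "(nat \<Rightarrow> nat \<Rightarrow> complex) \<Rightarrow> bool" where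
  "bipoly c \<longleftrightarrow> finite {(j, k). c j k \<noteq> 0}"

definition herm_sym :: "(nat \<Rightarrow> nat \<Rightarrow> complex) \<Rightarrow> bool" where
  "herm_sym c \<longleftrightarrow> bipoly c \<and> (\<forall>j k. c j k = cnj (c k j))"

definition heval :: "(nat \<Rightarrow> nat \<Rightarrow> complex) \<Rightarrow> complex \<Rightarrow> complex" where
  "heval c z = (\<Sum>(j, k) \<in> {(j, k). c j k \<noteq> 0}. c j k * z ^ j * cnj z ^ k)"

definition nonneg_herm :: "(nat \<Rightarrow> nat \<Rightarrow> complex) \<Rightarrow> bool" where
  "nonneg_herm c \<longleftrightarrow> herm_sym c \<and> (\<forall>z. Im (heval c z) = 0 \<and> Re (heval c z) \<ge> 0)"

definition sqnorm :: "complex poly list \<Rightarrow> complex \<Rightarrow> real" where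
  "sqnorm F z = (\<Sum>f\<leftarrow>F. (cmod (poly f z))\<^sup>2)"

definition Qprime1 :: "(nat \<Rightarrow> nat \<Rightarrow> complex) set" where
  "Qprime1 = {r. nonneg_herm r \<and>
      (\<exists>s F. nonneg_herm s \<and> (\<exists>z. heval s z \<noteq> 0) \<and>
             (\<forall>z. heval r z * heval s z = complex_of_real (sqnorm F z)))}"

end

theory Submission
  imports Defs
begin

text \<open>Polarize: write \<open>r(z, conj z) = R(z, w)\<close> at \<open>w = conj z\<close> and likewise for \<open>s\<close> and
  \<open>\<parallel>F\<parallel>\<^sup>2\<close>, so that \<open>R S = \<Sum> f(z) conj (f (conj w))\<close> holds identically in \<open>(z, w)\<close>.
  If \<open>r(0,0) = 0\<close>, then \<open>\<parallel>F(0)\<parallel>\<^sup>2 = 0\<close>, so the right-hand side is divisible by \<open>z w\<close>;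
  putting \<open>w = 0\<close> gives \<open>R(z,0) S(z,0) = 0\<close>, and the pure term makes \<open>R(z,0) \<noteq> 0\<close>, so
  \<open>S(z,0) = 0\<close> and by Hermitian symmetry \<open>S(0,w) = 0\<close>. Hence \<open>S = z w S'\<close>, where \<open>S'\<close>
  satisfies the same hypotheses. Iterating, \<open>S\<close> is divisible by every power of \<open>z w\<close>,
  so \<open>S = 0\<close>, contradicting \<open>s \<noteq> 0\<close>.\<close>

inductive polyfun2 :: "(complex \<Rightarrow> complex \<Rightarrow> complex) \<Rightarrow> bool" where
  const: "polyfun2 (\<lambda>z w. c)"
| var1: "polyfun2 (\<lambda>z w. z)"
| var2: "polyfun2 (\<lambda>z w. w)"
| add: "polyfun2 P \<Longrightarrow> polyfun2 Q \<Longrightarrow> polyfun2 (\<lambda>z w. P z w + Q z w)"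
| mult: "polyfun2 P \<Longrightarrow> polyfun2 Q \<Longrightarrow> polyfun2 (\<lambda>z w. P z w * Q z w)"

lemma polyfun2_compose:
  assumes "polyfun2 P" "polyfun2 A" "polyfun2 B"
  shows "polyfun2 (\<lambda>z w. P (A z w) (B z w))"
  using assms(1)
  by induction (use assms(2,3) in \<open>auto intro: polyfun2.intros\<close>)

lemma polyfun2_swap: "polyfun2 P \<Longrightarrow> polyfun2 (\<lambda>z w. P w z)"
  using polyfun2_compose[OF _ polyfun2.var2 polyfun2.var1] by blast

lemma polyfun2_diff:
  assumes "polyfun2 P" "polyfun2 Q"
  shows "polyfun2 (\<lambda>z w. P z w - Q z w)"
proof -
  have "polyfun2 (\<lambda>z w. P z w + (-1) * Q z w)"
    by (intro polyfun2.intros assms)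
  then show ?thesis by simp
qed

lemma polyfun2_sum:
  "finite A \<Longrightarrow> (\<And>a. a \<in> A \<Longrightarrow> polyfun2 (f a)) \<Longrightarrow> polyfun2 (\<lambda>z w. \<Sum>a\<in>A. f a z w)"
proof (induction A rule: finite_induct)
  case empty
  then show ?case using polyfun2.const[of 0] by simp
next
  case (insert x A)
  then have "polyfun2 (\<lambda>z w. f x z w + (\<Sum>a\<in>A. f a z w))"
    by (intro polyfun2.add) auto
  with insert show ?case by simp
qed

lemma polyfun2_power: "polyfun2 P \<Longrightarrow> polyfun2 (\<lambda>z w. P z w ^ n)"
proof (induction n)
  case 0
  then show ?case using polyfun2.const[of 1] by simp
next
  case (Suc n)
  then have "polyfun2 (\<lambda>z w. P z w * P z w ^ n)" by (intro polyfun2.mult)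
  then show ?case by simp
qed

lemma polyfun2_poly1: "polyfun2 (\<lambda>z w. poly p z)"
proof -
  have "polyfun2 (\<lambda>z w. \<Sum>i\<le>degree p. coeff p i * z ^ i)"
    by (intro polyfun2_sum polyfun2.mult polyfun2.const polyfun2_power polyfun2.var1) auto
  then show ?thesis by (simp add: poly_altdef)
qed

lemma polyfun2_poly2: "polyfun2 (\<lambda>z w. poly p w)"
  using polyfun2_swap[OF polyfun2_poly1] by simp

lemma polyfun2_adjoint: "polyfun2 P \<Longrightarrow> polyfun2 (\<lambda>z w. cnj (P (cnj w) (cnj z)))"
proof (induction rule: polyfun2.induct)
  case (add P Q)
  then show ?case using polyfun2.add[OF add.IH] by simp
next
  case (mult P Q)
  then show ?case using polyfun2.mult[OF mult.IH] by simp
qed (auto intro: polyfun2.intros)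

lemma polyfun2_poly_in_snd: "polyfun2 P \<Longrightarrow> \<exists>p. \<forall>w. P z w = poly p w"
proof (induction rule: polyfun2.induct)
  case (const c)
  show ?case by (rule exI[of _ "[:c:]"]) simp
next
  case var1
  show ?case by (rule exI[of _ "[:z:]"]) simp
next
  case var2
  show ?case by (rule exI[of _ "[:0, 1:]"]) simp
next
  case (add P Q)
  then obtain p q where "\<forall>w. P z w = poly p w" "\<forall>w. Q z w = poly q w" by blast
  then show ?case by (intro exI[of _ "p + q"]) simp
next
  case (mult P Q)
  then obtain p q where "\<forall>w. P z w = poly p w" "\<forall>w. Q z w = poly q w" by blast
  then show ?case by (intro exI[of _ "p * q"]) simp
qed

lemma polyfun2_poly_in_fst:
  assumes "polyfun2 P"
  shows "\<exists>p. \<forall>z. P z w = poly p z"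
  using polyfun2_poly_in_snd[OF polyfun2_swap[OF assms], of w] by simp

lemma poly_eq_0_if_infinite_roots:
  fixes p :: "'a::idom poly"
  assumes "infinite A" "\<And>x. x \<in> A \<Longrightarrow> poly p x = 0"
  shows "p = 0"
  using assms poly_roots_finite[of p] finite_subset[of A "{x. poly p x = 0}"] by blast

lemma polyfun2_eq_0_on_product:
  assumes "polyfun2 P" "infinite A" "infinite B" "\<And>a b. a \<in> A \<Longrightarrow> b \<in> B \<Longrightarrow> P a b = 0"
  shows "P z w = 0"
proof -
  have "P z b = 0" if "b \<in> B" for b
  proof -
    obtain p where p: "\<forall>z. P z b = poly p z"
      using polyfun2_poly_in_fst[OF assms(1)] by blast
    with assms(2,4) that have "p = 0" by (metis poly_eq_0_if_infinite_roots)
    with p show ?thesis by simp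
  qed
  moreover obtain q where q: "\<forall>w. P z w = poly q w"
    using polyfun2_poly_in_snd[OF assms(1)] by blast
  ultimately have "q = 0" using assms(3) by (metis poly_eq_0_if_infinite_roots)
  with q show ?thesis by simp
qed

lemma infinite_range_of_real: "infinite (range complex_of_real)"
  using finite_imageD[of complex_of_real UNIV] infinite_UNIV_char_0[where 'a=real]
  by (metis inj_of_real)

lemma infinite_nonzero_complex: "infinite (UNIV - {0::complex})"
  using infinite_UNIV_char_0[where 'a=complex] by auto

text \<open>The identity principle for polarization: \<open>(z, conj z)\<close> is the image of \<open>\<real>\<^sup>2\<close> under
  the invertible linear map \<open>(a, b) \<mapsto> (a + i b, a - i b)\<close>.\<close>

lemma polyfun2_eq_if_eq_on_conj_diagonal:
  assumes "polyfun2 P" "polyfun2 Q" "\<And>z. P z (cnj z) = Q z (cnj z)"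
  shows "P z w = Q z w"
proof -
  define D where "D = (\<lambda>a b. P (a + \<i> * b) (a - \<i> * b) - Q (a + \<i> * b) (a - \<i> * b))"
  have "polyfun2 (\<lambda>a b. a + \<i> * b)" "polyfun2 (\<lambda>a b. a - \<i> * b)"
    by (intro polyfun2_diff polyfun2.intros)+
  then have "polyfun2 D"
    unfolding D_def using polyfun2_compose assms(1,2) by (blast intro: polyfun2_diff)
  moreover have "D a b = 0" if "a \<in> range complex_of_real" "b \<in> range complex_of_real" for a b
  proof -
    have "cnj (a + \<i> * b) = a - \<i> * b" using that by auto
    then show ?thesis unfolding D_def using assms(3)[of "a + \<i> * b"] by simp
  qed
  ultimately have "D ((z + w) / 2) ((z - w) / (2 * \<i>)) = 0"
    using polyfun2_eq_0_on_product infinite_range_of_real by blast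
  moreover have "(z + w) / 2 + \<i> * ((z - w) / (2 * \<i>)) = z"
    "(z + w) / 2 - \<i> * ((z - w) / (2 * \<i>)) = w"
    by (auto simp: field_simps)
  ultimately show ?thesis unfolding D_def by simp
qed

lemma polyfun2_cancel_mult_zw:
  assumes "polyfun2 P" "polyfun2 Q" "\<And>z w. z * w * P z w = z * w * Q z w"
  shows "P z w = Q z w"
proof -
  have "(\<lambda>a b. P a b - Q a b) z w = 0"
    by (rule polyfun2_eq_0_on_product[OF polyfun2_diff[OF assms(1,2)]
          infinite_nonzero_complex infinite_nonzero_complex]) (use assms(3) in auto)
  then show ?thesis by simp
qed

lemma polyfun2_split_snd: "polyfun2 P \<Longrightarrow> \<exists>T. polyfun2 T \<and> (\<forall>z w. P z w = P z 0 + w * T z w)"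
proof (induction rule: polyfun2.induct)
  case (const c)
  show ?case by (intro exI[of _ "\<lambda>z w. 0"] conjI polyfun2.const) simp
next
  case var1
  show ?case by (intro exI[of _ "\<lambda>z w. 0"] conjI polyfun2.const) simp
next
  case var2
  show ?case by (intro exI[of _ "\<lambda>z w. 1"] conjI polyfun2.const) simp
next
  case (add P Q)
  then obtain T U where T: "polyfun2 T" "\<forall>z w. P z w = P z 0 + w * T z w"
    and U: "polyfun2 U" "\<forall>z w. Q z w = Q z 0 + w * U z w" by blast
  have "P z w + Q z w = P z 0 + Q z 0 + w * (T z w + U z w)" for z w
    using T(2)[rule_format, of z w] U(2)[rule_format, of z w] by (simp add: distrib_left)
  with polyfun2.add[OF T(1) U(1)] show ?case by blast
next
  case (mult P Q)
  then obtain T U where T: "polyfun2 T" "\<forall>z w. P z w = P z 0 + w * T z w"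
    and U: "polyfun2 U" "\<forall>z w. Q z w = Q z 0 + w * U z w" by blast
  define V where "V = (\<lambda>z w. T z w * Q z 0 + P z 0 * U z w + w * T z w * U z w)"
  have P0: "polyfun2 (\<lambda>z w. P z 0)" and Q0: "polyfun2 (\<lambda>z w. Q z 0)"
    using polyfun2_compose[OF _ polyfun2.var1 polyfun2.const] mult.hyps by blast+
  have "polyfun2 V"
    unfolding V_def
    by (rule polyfun2.add polyfun2.mult P0 Q0 T(1) U(1) polyfun2.var2)+
  moreover have "P z w * Q z w = P z 0 * Q z 0 + w * V z w" for z w
  proof -
    have "P z w * Q z w = (P z 0 + w * T z w) * (Q z 0 + w * U z w)"
      using T(2)[rule_format, of z w] U(2)[rule_format, of z w] by simp
    then show ?thesis unfolding V_def by (simp add: algebra_simps)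
  qed
  ultimately show ?case by blast
qed

lemma polyfun2_factor_zw:
  assumes "polyfun2 P" "\<And>z. P z 0 = 0" "\<And>w. P 0 w = 0"
  shows "\<exists>Q. polyfun2 Q \<and> (\<forall>z w. P z w = z * w * Q z w)"
proof -
  obtain T where T: "polyfun2 T" "\<And>z w. P z w = w * T z w"
    using polyfun2_split_snd[OF assms(1)] assms(2) by auto
  have T0: "T 0 w = 0" for w
  proof -
    obtain p where p: "\<forall>w. T 0 w = poly p w"
      using polyfun2_poly_in_snd[OF T(1)] by blast
    have "poly p x = 0" if "x \<in> UNIV - {0}" for x
      using that T(2)[of 0 x] assms(3)[of x] p by simp
    then have "p = 0" using poly_eq_0_if_infinite_roots infinite_nonzero_complex by blast
    with p show ?thesis by simp
  qed
  obtain U where U: "polyfun2 U" "\<forall>z w. T w z = T 0 z + w * U z w"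
    using polyfun2_split_snd[OF polyfun2_swap[OF T(1)]] by blast
  have "P z w = z * w * U w z" for z w
    using T(2)[of z w] U(2)[rule_format, of z w] T0[of w] by (simp add: algebra_simps)
  with polyfun2_swap[OF U(1)] show ?thesis by blast
qed

lemma polyfun2_eq_0_if_factor_powers:
  assumes "polyfun2 P" "\<And>n. \<exists>Q. polyfun2 Q \<and> (\<forall>z w. P z w = (z * w) ^ n * Q z w)"
  shows "P z w = 0"
proof (cases "z = 0")
  case True
  obtain Q where "\<forall>z w. P z w = (z * w) ^ 1 * Q z w" using assms(2) by blast
  with True show ?thesis by simp
next
  case False
  obtain p where p: "\<forall>w. P z w = poly p w"
    using polyfun2_poly_in_snd[OF assms(1)] by blast
  define n where "n = Suc (degree p)"
  obtain Q where Q: "polyfun2 Q" "\<forall>z w. P z w = (z * w) ^ n * Q z w"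
    using assms(2) by blast
  obtain q where q: "\<forall>w. Q z w = poly q w"
    using polyfun2_poly_in_snd[OF Q(1)] by blast
  have "poly p = poly (smult (z ^ n) (monom 1 n * q))"
    using p Q(2) q by (auto simp: poly_monom power_mult_distrib mult_ac)
  then have p_eq: "p = smult (z ^ n) (monom 1 n * q)"
    by (simp add: poly_eq_poly_eq_iff)
  have "q = 0"
  proof (rule ccontr)
    assume "q \<noteq> 0"
    with False have "degree p = n + degree q"
      unfolding p_eq by (simp add: degree_mult_eq degree_monom_eq)
    then show False by (simp add: n_def)
  qed
  with Q(2) q show ?thesis by simp
qed

definition polarized_sqnorm :: "complex poly list \<Rightarrow> complex \<Rightarrow> complex \<Rightarrow> complex" where
  "polarized_sqnorm G z w = (\<Sum>g\<leftarrow>G. poly g z * poly (map_poly cnj g) w)"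

lemma polarized_sqnorm_Nil [simp]: "polarized_sqnorm [] z w = 0"
  by (simp add: polarized_sqnorm_def)

lemma polarized_sqnorm_Cons [simp]:
  "polarized_sqnorm (g # G) z w = poly g z * poly (map_poly cnj g) w + polarized_sqnorm G z w"
  by (simp add: polarized_sqnorm_def)

lemma polyfun2_polarized_sqnorm: "polyfun2 (polarized_sqnorm G)"
proof (induction G)
  case Nil
  show ?case using polyfun2.const[of 0] by simp
next
  case (Cons g G)
  have "polyfun2 (\<lambda>z w. poly g z * poly (map_poly cnj g) w + polarized_sqnorm G z w)"
    by (intro polyfun2.add polyfun2.mult polyfun2_poly1 polyfun2_poly2 Cons.IH)
  then show ?case by (simp del: poly_map_poly_cnj)
qed

lemma polarized_sqnorm_conj_diagonal: "polarized_sqnorm G z (cnj z) = of_real (sqnorm G z)"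
  by (induction G) (auto simp: sqnorm_def complex_norm_square[symmetric])

lemma polarized_sqnorm_factor_zw:
  assumes "sqnorm G 0 = 0"
  shows "\<exists>G'. \<forall>z w. polarized_sqnorm G z w = z * w * polarized_sqnorm G' z w"
proof -
  have "\<forall>x\<in>set (map (\<lambda>g. (cmod (poly g 0))\<^sup>2) G). x = 0"
    using assms by (subst sum_list_nonneg_eq_0_iff[symmetric]) (auto simp: sqnorm_def)
  then have "\<forall>g\<in>set G. poly g 0 = 0" by simp
  then show ?thesis
  proof (induction G)
    case Nil
    show ?case by (rule exI[of _ "[]"]) simp
  next
    case (Cons g G)
    then obtain G' where G': "\<forall>z w. polarized_sqnorm G z w = z * w * polarized_sqnorm G' z w"
      by auto
    obtain q where "g = pCons 0 q"
      using Cons.prems by (cases g) simp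
    with G' show ?case
      by (intro exI[of _ "q # G'"]) (simp add: algebra_simps)
  qed
qed

text \<open>\<open>S\<close> plays the role of the polarization of the multiplier \<open>s\<close> in \<open>r s = \<parallel>F\<parallel>\<^sup>2\<close>.\<close>

definition hermitian_sos_multiplier ::
    "(complex \<Rightarrow> complex \<Rightarrow> complex) \<Rightarrow> (complex \<Rightarrow> complex \<Rightarrow> complex) \<Rightarrow> bool" where
  "hermitian_sos_multiplier R S \<longleftrightarrow> polyfun2 S \<and> (\<forall>z w. S z w = cnj (S (cnj w) (cnj z))) \<and>
     (\<exists>G. \<forall>z w. R z w * S z w = polarized_sqnorm G z w)"

lemma hermitian_sos_multiplier_factor_zw:
  assumes R: "polyfun2 R" "R 0 0 = 0" "R z\<^sub>0 0 \<noteq> 0"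
    and S: "hermitian_sos_multiplier R S"
  shows "\<exists>S'. hermitian_sos_multiplier R S' \<and> (\<forall>z w. S z w = z * w * S' z w)"
proof -
  obtain G where G: "\<And>z w. R z w * S z w = polarized_sqnorm G z w"
    and S_poly: "polyfun2 S" and S_herm: "\<And>z w. S z w = cnj (S (cnj w) (cnj z))"
    using S unfolding hermitian_sos_multiplier_def by blast
  have "sqnorm G 0 = 0"
    using G[of 0 0] polarized_sqnorm_conj_diagonal[of G 0] R(2) by simp
  then obtain G' where G': "\<And>z w. polarized_sqnorm G z w = z * w * polarized_sqnorm G' z w"
    using polarized_sqnorm_factor_zw by blast
  have S_z0: "S z 0 = 0" for z
  proof -
    obtain p q where p: "\<forall>z. R z 0 = poly p z" and q: "\<forall>z. S z 0 = poly q z"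
      using polyfun2_poly_in_fst[OF R(1)] polyfun2_poly_in_fst[OF S_poly] by metis
    have "R x 0 * S x 0 = 0" for x
      using G[of x 0] G'[of x 0] by simp
    then have "p * q = 0"
      using p q poly_all_0_iff_0[of "p * q"] by simp
    moreover have "p \<noteq> 0" using p R(3) by auto
    ultimately show ?thesis using q by simp
  qed
  have S_0w: "S 0 w = 0" for w
    using S_herm[of 0 w] S_z0[of "cnj w"] by simp
  obtain S' where S': "polyfun2 S'" "\<And>z w. S z w = z * w * S' z w"
    using polyfun2_factor_zw[OF S_poly S_z0 S_0w] by blast
  have "S' z w = cnj (S' (cnj w) (cnj z))" for z w
  proof (rule polyfun2_cancel_mult_zw[OF S'(1) polyfun2_adjoint[OF S'(1)]])
    fix z w
    show "z * w * S' z w = z * w * cnj (S' (cnj w) (cnj z))"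
      using S_herm[of z w] S'(2)[of z w] S'(2)[of "cnj w" "cnj z"] by (simp add: mult_ac)
  qed
  moreover have "R z w * S' z w = polarized_sqnorm G' z w" for z w
  proof (rule polyfun2_cancel_mult_zw[OF polyfun2.mult[OF R(1) S'(1)] polyfun2_polarized_sqnorm])
    fix z w
    show "z * w * (R z w * S' z w) = z * w * polarized_sqnorm G' z w"
      using G[of z w] G'[of z w] S'(2)[of z w] by (simp add: mult_ac)
  qed
  ultimately show ?thesis
    unfolding hermitian_sos_multiplier_def using S' by blast
qed

lemma hermitian_sos_multiplier_factor_power:
  assumes "polyfun2 R" "R 0 0 = 0" "R z\<^sub>0 0 \<noteq> 0" "hermitian_sos_multiplier R S"
  shows "\<exists>Q. polyfun2 Q \<and> (\<forall>z w. S z w = (z * w) ^ n * Q z w)"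
proof -
  have "\<exists>Q. hermitian_sos_multiplier R Q \<and> (\<forall>z w. S z w = (z * w) ^ n * Q z w)"
  proof (induction n)
    case 0
    show ?case using assms(4) by auto
  next
    case (Suc n)
    then obtain Q where Q: "hermitian_sos_multiplier R Q" "\<forall>z w. S z w = (z * w) ^ n * Q z w"
      by blast
    obtain Q' where "hermitian_sos_multiplier R Q'" "\<forall>z w. Q z w = z * w * Q' z w"
      using hermitian_sos_multiplier_factor_zw[OF assms(1-3) Q(1)] by blast
    with Q(2) show ?case by (intro exI[of _ Q']) (simp add: mult_ac)
  qed
  then show ?thesis unfolding hermitian_sos_multiplier_def by blast
qed

definition polarization :: "nat \<Rightarrow> (nat \<Rightarrow> nat \<Rightarrow> complex) \<Rightarrow> complex \<Rightarrow> complex \<Rightarrow> complex" where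
  "polarization N c z w = (\<Sum>j<N. \<Sum>k<N. c j k * z ^ j * w ^ k)"

lemma polyfun2_polarization: "polyfun2 (polarization N c)"
  unfolding polarization_def
  by (intro polyfun2_sum polyfun2.mult polyfun2.const polyfun2_power polyfun2.var1
      polyfun2.var2 finite_lessThan)

lemma bipoly_support_bounded: "bipoly c \<Longrightarrow> \<exists>N. {(j, k). c j k \<noteq> 0} \<subseteq> {..<N} \<times> {..<N}"
proof -
  assume "bipoly c"
  then have "finite {(j, k). c j k \<noteq> 0}" unfolding bipoly_def .
  then obtain N1 N2 where "fst ` {(j, k). c j k \<noteq> 0} \<subseteq> {..<N1}" "snd ` {(j, k). c j k \<noteq> 0} \<subseteq> {..<N2}"
    by (metis finite_imageI finite_nat_bounded)
  then show ?thesis by (intro exI[of _ "max N1 N2"]) force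
qed

lemma heval_eq_polarization:
  assumes "{(j, k). c j k \<noteq> 0} \<subseteq> {..<N} \<times> {..<N}"
  shows "heval c z = polarization N c z (cnj z)"
proof -
  have "heval c z = (\<Sum>(j, k)\<in>{..<N} \<times> {..<N}. c j k * z ^ j * cnj z ^ k)"
    unfolding heval_def using assms by (intro sum.mono_neutral_left) auto
  then show ?thesis
    by (simp add: polarization_def sum.cartesian_product)
qed

lemma polarization_hermitian:
  assumes "\<And>j k. c j k = cnj (c k j)"
  shows "polarization N c z w = cnj (polarization N c (cnj w) (cnj z))"
proof -
  have "cnj (c j k) = c k j" for j k
    using assms by (metis complex_cnj_cnj)
  then have "cnj (polarization N c (cnj w) (cnj z)) = (\<Sum>j<N. \<Sum>k<N. c k j * w ^ j * z ^ k)"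
    by (simp add: polarization_def)
  also have "\<dots> = polarization N c z w"
    unfolding polarization_def by (subst sum.swap) (simp add: mult_ac)
  finally show ?thesis by simp
qed

lemma polarization_at_0: "polarization N c z 0 = poly (\<Sum>j<N. monom (c j 0) j) z"
  by (cases N) (simp_all add: polarization_def poly_sum poly_monom
      sum.lessThan_Suc_shift del: sum.lessThan_Suc)

lemma coeff_sum_monom: "k < N \<Longrightarrow> coeff (\<Sum>j<N. monom (c j) j) k = c k"
  by (simp add: coeff_sum coeff_monom)

lemma polarization_nonzero_at_0:
  assumes "{(j, k). c j k \<noteq> 0} \<subseteq> {..<N} \<times> {..<N}" "c k 0 \<noteq> 0"
  obtains z where "polarization N c z 0 \<noteq> 0"
proof -
  have "k < N" using assms by blast
  then have "(\<Sum>j<N. monom (c j 0) j) \<noteq> 0"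
    using assms(2) by (metis coeff_0 coeff_sum_monom)
  then show ?thesis
    using that unfolding polarization_at_0 by (meson poly_all_0_iff_0)
qed

lemma hermitian_sos_multiplier_polarization:
  assumes "polyfun2 R" "herm_sym s" "{(j, k). s j k \<noteq> 0} \<subseteq> {..<N} \<times> {..<N}"
    and "\<And>z. R z (cnj z) * heval s z = of_real (sqnorm F z)"
  shows "hermitian_sos_multiplier R (polarization N s)"
proof -
  have "R z w * polarization N s z w = polarized_sqnorm F z w" for z w
  proof (rule polyfun2_eq_if_eq_on_conj_diagonal[where P = "\<lambda>z w. R z w * polarization N s z w"])
    show "polyfun2 (\<lambda>z w. R z w * polarization N s z w)"
      by (intro polyfun2.mult assms(1) polyfun2_polarization)
    show "polyfun2 (polarized_sqnorm F)" by (rule polyfun2_polarized_sqnorm)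
    show "R z (cnj z) * polarization N s z (cnj z) = polarized_sqnorm F z (cnj z)" for z
      using assms(4)[of z] heval_eq_polarization[OF assms(3)]
      by (simp add: polarized_sqnorm_conj_diagonal)
  qed
  moreover have "polarization N s z w = cnj (polarization N s (cnj w) (cnj z))" for z w
    using assms(2) unfolding herm_sym_def by (blast intro: polarization_hermitian)
  ultimately show ?thesis
    unfolding hermitian_sos_multiplier_def using polyfun2_polarization by blast
qed

theorem corollary4p1:
  assumes "r \<in> Qprime1"
    and "\<exists>k\<ge>1. r k 0 \<noteq> 0 \<or> r 0 k \<noteq> 0"
  shows "Re (heval r 0) > 0"
proof (rule ccontr)
  obtain s F where r: "nonneg_herm r" and s: "nonneg_herm s" and "\<exists>z. heval s z \<noteq> 0"
    and rsF: "\<And>z. heval r z * heval s z = complex_of_real (sqnorm F z)"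
    using assms(1) unfolding Qprime1_def by blast
  assume "\<not> Re (heval r 0) > 0"
  with r have r0: "heval r 0 = 0"
    unfolding nonneg_herm_def by (metis complex_eq_iff linorder_not_le order_antisym_conv zero_complex.sel)
  obtain Nr Ns where Nr: "{(j, k). r j k \<noteq> 0} \<subseteq> {..<Nr} \<times> {..<Nr}"
    and Ns: "{(j, k). s j k \<noteq> 0} \<subseteq> {..<Ns} \<times> {..<Ns}"
    using r s bipoly_support_bounded unfolding nonneg_herm_def herm_sym_def by metis
  define R S where "R = polarization Nr r" and "S = polarization Ns s"
  \<comment> \<open>Only a nonzero coefficient of some \<open>z\<^sup>k\<close> is used.\<close>
  obtain k where "r k 0 \<noteq> 0"
    using assms(2) r unfolding nonneg_herm_def herm_sym_def by (metis complex_cnj_zero)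
  then obtain z\<^sub>0 where "R z\<^sub>0 0 \<noteq> 0"
    unfolding R_def by (rule polarization_nonzero_at_0[OF Nr])
  moreover have "R 0 0 = 0"
    using r0 heval_eq_polarization[OF Nr, of 0] by (simp add: R_def)
  moreover have "hermitian_sos_multiplier R S"
    unfolding S_def using s rsF
    by (intro hermitian_sos_multiplier_polarization Ns)
      (auto simp: R_def polyfun2_polarization nonneg_herm_def heval_eq_polarization[OF Nr])
  ultimately have "S z w = 0" for z w
    using hermitian_sos_multiplier_factor_power[of R]
    by (intro polyfun2_eq_0_if_factor_powers) (auto simp: R_def S_def polyfun2_polarization)
  then show False
    using \<open>\<exists>z. heval s z \<noteq> 0\<close> heval_eq_polarization[OF Ns] by (simp add: S_def)
qed

end
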